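(* Let $\mathcal C,\mathcal D$ be strict monoidal categories, $F:\mathcal D\to\mathcal C$ a strong comonoidal functor with a left adjoint $\overline F:\mathcal C\to\mathcal D$, where $\overline F$ is equipped with a comonoidal structure $(\overline F^2,\overline F^0)$ such that the adjunction is comonoidal (i.e. its unit $\eta:\mathrm{Id}_{\mathcal C}\to F\overline F$ and counit are comonoidal transformations). Let $G$ be a comonoidal endofunctor of $\mathcal D$ and $(X,\gamma_X)\in\mathcal Z^G_{\mathrm{lax}}(\mathcal D)$. Define, for $V\in\mathcal C$, $$\gamma_{FX,V}:=F^2(G\overline F V,X)\circ F(\gamma_{X,\overline F V})\circ F^{-2}(X,\overline FV)\circ(FX\otimes\eta_V):FX\otimes V\to (FG\overline F)(V)\otimes FX.$$ Then $\gamma_{FX}$ is a lax $(FG\overline F)$-half-braiding on $FX$ (with $FG\overline F$ carrying the composite comonoidal structure), and $F_*:(X,\gamma_X)\mapsto(FX,\gamma_{FX})$, $f\mapsto F(f)$ defines a functor $F_*:\mathcal Z^G_{\mathrm{lax}}(\mathcal D)\to\mathcal Z^{FG\overline F}_{\mathrm{lax}}(\mathcal C)$.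
   Context: All monoidal categories are strict. A comonoidal functor is a triple $(F,F^2,F^0)$ with $F^0:F(\mathbf 1)\to\mathbf 1$ and $F^2(X,Y):F(X\otimes Y)\to FX\otimes FY$ natural, satisfying $(F^2(X,Y)\otimes FZ)F^2(X\otimes Y,Z)=(FX\otimes F^2(Y,Z))F^2(X,Y\otimes Z)$ and $(FX\otimes F^0)F^2(X,\mathbf 1)=\mathrm{id}=(F^0\otimes FX)F^2(\mathbf 1,X)$; it is strong if $F^2,F^0$ are invertible, and $F^{-2}$ denotes the inverse of $F^2$. Composite comonoidal structure: $(GF)^2(X,Y)=G^2(FX,FY)\circ G(F^2(X,Y))$, $(GF)^0=G^0\circ G(F^0)$. A comonoidal transformation $\alpha:F\to K$ satisfies $(\alpha_X\otimes\alpha_Y)F^2(X,Y)=K^2(X,Y)\alpha_{X\otimes Y}$ and $K^0\alpha_{\mathbf 1}=F^0$. For a comonoidal endofunctor $F$ of $\mathcal C$, a lax $F$-half-braiding on $X$ is a family $\gamma_{X,V}:X\otimes V\to FV\otimes X$ natural in $V$ with $(F^2(V,W)\otimes X)\gamma_{X,V\otimes W}=(FV\otimes\gamma_{X,W})(\gamma_{X,V}\otimes W)$ and $(F^0\otimes X)\gamma_{X,\mathbf 1}=\mathrm{id}_X$. $\mathcal Z^F_{\mathrm{lax}}(\mathcal C)$ is the category of pairs $(X,\gamma_X)$ with morphisms those $f:X_1\to X_2$ in $\mathcal C$ satisfying $(FV\otimes f)\gamma_{X_1,V}=\gamma_{X_2,V}(f\otimes V)$ for all $V$. *)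

theory Defs
  imports Main
begin

text \<open>Categories are given explicitly by carriers of objects and arrows
  (types 'o and 'm), domain, codomain, identities, composition
  (Cmp C g f means g after f), together with a tensor product on objects and
  arrows and a unit object.\<close>

record ('o,'m) moncat =
  Ob  :: "'o set"
  Ar  :: "'m set"
  Dm  :: "'m \<Rightarrow> 'o"
  Cd  :: "'m \<Rightarrow> 'o"
  Idm :: "'o \<Rightarrow> 'm"
  Cmp :: "'m \<Rightarrow> 'm \<Rightarrow> 'm"
  Tn  :: "'o \<Rightarrow> 'o \<Rightarrow> 'o"
  TnM :: "'m \<Rightarrow> 'm \<Rightarrow> 'm"
  UnitOb  :: "'o"

definition hom :: "('o,'m) moncat \<Rightarrow> 'o \<Rightarrow> 'o \<Rightarrow> 'm set" where
  "hom C A B = {f \<in> Ar C. Dm C f = A \<and> Cd C f = B}"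

definition strict_monoidal_category :: "('o,'m) moncat \<Rightarrow> bool" where
  "strict_monoidal_category C \<longleftrightarrow>
     (\<forall>f\<in>Ar C. Dm C f \<in> Ob C \<and> Cd C f \<in> Ob C) \<and>
     (\<forall>A\<in>Ob C. Idm C A \<in> hom C A A) \<and>
     (\<forall>f\<in>Ar C. \<forall>g\<in>Ar C. Dm C g = Cd C f \<longrightarrow> Cmp C g f \<in> hom C (Dm C f) (Cd C g)) \<and>
     (\<forall>f\<in>Ar C. Cmp C (Idm C (Cd C f)) f = f \<and> Cmp C f (Idm C (Dm C f)) = f) \<and>
     (\<forall>f\<in>Ar C. \<forall>g\<in>Ar C. \<forall>h\<in>Ar C. Dm C g = Cd C f \<longrightarrow> Dm C h = Cd C g \<longrightarrow>
        Cmp C h (Cmp C g f) = Cmp C (Cmp C h g) f) \<and>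
     UnitOb C \<in> Ob C \<and>
     (\<forall>A\<in>Ob C. \<forall>B\<in>Ob C. Tn C A B \<in> Ob C) \<and>
     (\<forall>f\<in>Ar C. \<forall>g\<in>Ar C.
        TnM C f g \<in> hom C (Tn C (Dm C f) (Dm C g)) (Tn C (Cd C f) (Cd C g))) \<and>
     (\<forall>A\<in>Ob C. \<forall>B\<in>Ob C. TnM C (Idm C A) (Idm C B) = Idm C (Tn C A B)) \<and>
     (\<forall>f\<in>Ar C. \<forall>g\<in>Ar C. \<forall>f'\<in>Ar C. \<forall>g'\<in>Ar C.
        Dm C g = Cd C f \<longrightarrow> Dm C g' = Cd C f' \<longrightarrow>
        TnM C (Cmp C g f) (Cmp C g' f') = Cmp C (TnM C g g') (TnM C f f')) \<and>
     (\<forall>A\<in>Ob C. \<forall>B\<in>Ob C. \<forall>E\<in>Ob C. Tn C (Tn C A B) E = Tn C A (Tn C B E)) \<and>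
     (\<forall>A\<in>Ob C. Tn C (UnitOb C) A = A \<and> Tn C A (UnitOb C) = A) \<and>
     (\<forall>f\<in>Ar C. \<forall>g\<in>Ar C. \<forall>h\<in>Ar C. TnM C (TnM C f g) h = TnM C f (TnM C g h)) \<and>
     (\<forall>f\<in>Ar C. TnM C (Idm C (UnitOb C)) f = f \<and> TnM C f (Idm C (UnitOb C)) = f)"

definition iso :: "('o,'m) moncat \<Rightarrow> 'm \<Rightarrow> bool" where
  "iso C f \<longleftrightarrow> f \<in> Ar C \<and> (\<exists>g\<in>hom C (Cd C f) (Dm C f).
      Cmp C g f = Idm C (Dm C f) \<and> Cmp C f g = Idm C (Cd C f))"

text \<open>A functor between such categories together with (candidate) comonoidal
  structure maps F2 X Y : F(X (x) Y) -> FX (x) FY and F0 : F(1) -> 1.\<close>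

record ('a,'b,'c,'d) cmf =
  cfo :: "'a \<Rightarrow> 'c"
  cfm :: "'b \<Rightarrow> 'd"
  cf2 :: "'a \<Rightarrow> 'a \<Rightarrow> 'd"
  cf0 :: "'d"

definition is_functor :: "('a,'b) moncat \<Rightarrow> ('c,'d) moncat \<Rightarrow> ('a,'b,'c,'d) cmf \<Rightarrow> bool" where
  "is_functor C D F \<longleftrightarrow>
     (\<forall>A\<in>Ob C. cfo F A \<in> Ob D) \<and>
     (\<forall>A\<in>Ob C. \<forall>B\<in>Ob C. \<forall>f\<in>hom C A B. cfm F f \<in> hom D (cfo F A) (cfo F B)) \<and>
     (\<forall>A\<in>Ob C. cfm F (Idm C A) = Idm D (cfo F A)) \<and>
     (\<forall>f\<in>Ar C. \<forall>g\<in>Ar C. Dm C g = Cd C f \<longrightarrow> cfm F (Cmp C g f) = Cmp D (cfm F g) (cfm F f))"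

definition comonoidal_functor :: "('a,'b) moncat \<Rightarrow> ('c,'d) moncat \<Rightarrow> ('a,'b,'c,'d) cmf \<Rightarrow> bool" where
  "comonoidal_functor C D F \<longleftrightarrow>
     is_functor C D F \<and>
     (\<forall>X\<in>Ob C. \<forall>Y\<in>Ob C. cf2 F X Y \<in> hom D (cfo F (Tn C X Y)) (Tn D (cfo F X) (cfo F Y))) \<and>
     cf0 F \<in> hom D (cfo F (UnitOb C)) (UnitOb D) \<and>
     (\<forall>f\<in>Ar C. \<forall>g\<in>Ar C.
        Cmp D (TnM D (cfm F f) (cfm F g)) (cf2 F (Dm C f) (Dm C g))
        = Cmp D (cf2 F (Cd C f) (Cd C g)) (cfm F (TnM C f g))) \<and>
     (\<forall>X\<in>Ob C. \<forall>Y\<in>Ob C. \<forall>Z\<in>Ob C.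
        Cmp D (TnM D (cf2 F X Y) (Idm D (cfo F Z))) (cf2 F (Tn C X Y) Z)
        = Cmp D (TnM D (Idm D (cfo F X)) (cf2 F Y Z)) (cf2 F X (Tn C Y Z))) \<and>
     (\<forall>X\<in>Ob C.
        Cmp D (TnM D (Idm D (cfo F X)) (cf0 F)) (cf2 F X (UnitOb C)) = Idm D (cfo F X) \<and>
        Cmp D (TnM D (cf0 F) (Idm D (cfo F X))) (cf2 F (UnitOb C) X) = Idm D (cfo F X))"

definition strong_with_inverse ::
  "('a,'b) moncat \<Rightarrow> ('c,'d) moncat \<Rightarrow> ('a,'b,'c,'d) cmf \<Rightarrow> ('a \<Rightarrow> 'a \<Rightarrow> 'd) \<Rightarrow> bool" where
  "strong_with_inverse C D F Finv2 \<longleftrightarrow>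
     iso D (cf0 F) \<and>
     (\<forall>X\<in>Ob C. \<forall>Y\<in>Ob C.
        Finv2 X Y \<in> hom D (Tn D (cfo F X) (cfo F Y)) (cfo F (Tn C X Y)) \<and>
        Cmp D (Finv2 X Y) (cf2 F X Y) = Idm D (cfo F (Tn C X Y)) \<and>
        Cmp D (cf2 F X Y) (Finv2 X Y) = Idm D (Tn D (cfo F X) (cfo F Y)))"

definition cmf_id :: "('a,'b) moncat \<Rightarrow> ('a,'b,'a,'b) cmf" where
  "cmf_id C = \<lparr>cfo = id, cfm = id, cf2 = (\<lambda>X Y. Idm C (Tn C X Y)), cf0 = Idm C (UnitOb C)\<rparr>"

definition cmf_comp :: "('e,'f) moncat \<Rightarrow> ('c,'d,'e,'f) cmf \<Rightarrow> ('a,'b,'c,'d) cmf \<Rightarrow> ('a,'b,'e,'f) cmf" where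
  "cmf_comp E G F = \<lparr>cfo = cfo G \<circ> cfo F, cfm = cfm G \<circ> cfm F,
      cf2 = (\<lambda>X Y. Cmp E (cf2 G (cfo F X) (cfo F Y)) (cfm G (cf2 F X Y))),
      cf0 = Cmp E (cf0 G) (cfm G (cf0 F))\<rparr>"

definition nat_trans ::
  "('a,'b) moncat \<Rightarrow> ('c,'d) moncat \<Rightarrow> ('a,'b,'c,'d) cmf \<Rightarrow> ('a,'b,'c,'d) cmf \<Rightarrow> ('a \<Rightarrow> 'd) \<Rightarrow> bool" where
  "nat_trans C D F K \<alpha> \<longleftrightarrow>
     (\<forall>A\<in>Ob C. \<alpha> A \<in> hom D (cfo F A) (cfo K A)) \<and>
     (\<forall>f\<in>Ar C. Cmp D (\<alpha> (Cd C f)) (cfm F f) = Cmp D (cfm K f) (\<alpha> (Dm C f)))"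

definition comonoidal_transformation ::
  "('a,'b) moncat \<Rightarrow> ('c,'d) moncat \<Rightarrow> ('a,'b,'c,'d) cmf \<Rightarrow> ('a,'b,'c,'d) cmf \<Rightarrow> ('a \<Rightarrow> 'd) \<Rightarrow> bool" where
  "comonoidal_transformation C D F K \<alpha> \<longleftrightarrow>
     nat_trans C D F K \<alpha> \<and>
     (\<forall>X\<in>Ob C. \<forall>Y\<in>Ob C.
        Cmp D (TnM D (\<alpha> X) (\<alpha> Y)) (cf2 F X Y) = Cmp D (cf2 K X Y) (\<alpha> (Tn C X Y))) \<and>
     Cmp D (cf0 K) (\<alpha> (UnitOb C)) = cf0 F"

definition adjunction ::
  "('a,'b) moncat \<Rightarrow> ('c,'d) moncat \<Rightarrow> ('a,'b,'c,'d) cmf \<Rightarrow> ('c,'d,'a,'b) cmf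
     \<Rightarrow> ('a \<Rightarrow> 'b) \<Rightarrow> ('c \<Rightarrow> 'd) \<Rightarrow> bool" where
  "adjunction C D Fb F \<eta> \<epsilon> \<longleftrightarrow>
     is_functor C D Fb \<and> is_functor D C F \<and>
     nat_trans C C (cmf_id C) (cmf_comp C F Fb) \<eta> \<and>
     nat_trans D D (cmf_comp D Fb F) (cmf_id D) \<epsilon> \<and>
     (\<forall>X\<in>Ob D. Cmp C (cfm F (\<epsilon> X)) (\<eta> (cfo F X)) = Idm C (cfo F X)) \<and>
     (\<forall>V\<in>Ob C. Cmp D (\<epsilon> (cfo Fb V)) (cfm Fb (\<eta> V)) = Idm D (cfo Fb V))"

definition lax_half_braiding ::
  "('a,'b) moncat \<Rightarrow> ('a,'b,'a,'b) cmf \<Rightarrow> 'a \<Rightarrow> ('a \<Rightarrow> 'b) \<Rightarrow> bool" where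
  "lax_half_braiding C H X \<gamma> \<longleftrightarrow>
     X \<in> Ob C \<and>
     (\<forall>V\<in>Ob C. \<gamma> V \<in> hom C (Tn C X V) (Tn C (cfo H V) X)) \<and>
     (\<forall>v\<in>Ar C. Cmp C (\<gamma> (Cd C v)) (TnM C (Idm C X) v)
                = Cmp C (TnM C (cfm H v) (Idm C X)) (\<gamma> (Dm C v))) \<and>
     (\<forall>V\<in>Ob C. \<forall>W\<in>Ob C.
        Cmp C (TnM C (cf2 H V W) (Idm C X)) (\<gamma> (Tn C V W))
        = Cmp C (TnM C (Idm C (cfo H V)) (\<gamma> W)) (TnM C (\<gamma> V) (Idm C W))) \<and>
     Cmp C (TnM C (cf0 H) (Idm C X)) (\<gamma> (UnitOb C)) = Idm C X"

definition lax_Z_mor ::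
  "('a,'b) moncat \<Rightarrow> ('a,'b,'a,'b) cmf \<Rightarrow> 'a \<Rightarrow> ('a \<Rightarrow> 'b) \<Rightarrow> 'a \<Rightarrow> ('a \<Rightarrow> 'b) \<Rightarrow> 'b \<Rightarrow> bool" where
  "lax_Z_mor C H X1 \<gamma>1 X2 \<gamma>2 f \<longleftrightarrow>
     f \<in> hom C X1 X2 \<and>
     (\<forall>V\<in>Ob C. Cmp C (TnM C (Idm C (cfo H V)) f) (\<gamma>1 V) = Cmp C (\<gamma>2 V) (TnM C f (Idm C V)))"

definition induced_gamma ::
  "('a,'b) moncat \<Rightarrow> ('c,'d,'a,'b) cmf \<Rightarrow> ('c \<Rightarrow> 'c \<Rightarrow> 'b) \<Rightarrow> ('a,'b,'c,'d) cmf
     \<Rightarrow> ('c,'d,'c,'d) cmf \<Rightarrow> ('a \<Rightarrow> 'b) \<Rightarrow> 'c \<Rightarrow> ('c \<Rightarrow> 'd) \<Rightarrow> 'a \<Rightarrow> 'b" where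
  "induced_gamma C F Finv2 Fb G \<eta> X \<gamma> V =
     Cmp C (cf2 F (cfo G (cfo Fb V)) X)
       (Cmp C (cfm F (\<gamma> (cfo Fb V)))
          (Cmp C (Finv2 X (cfo Fb V)) (TnM C (Idm C (cfo F X)) (\<eta> V))))"

end

theory Submission
  imports Defs
begin

(* Its axioms
   are images of those of X, transported along the naturality and coassociativity of F^2
   and F^-2. For multiplicativity the decisive input is that the unit is comonoidal,
   F(Fb^2) \<circ> \<eta> = F^-2 \<circ> (\<eta> \<otimes> \<eta>): it splits the factor
   F^-2(X, Fb (V \<otimes> W)) of the half-braiding at V \<otimes> W into the factors coming from
   V and from W. Only the unit of the adjunction enters the argument. *)

locale strict_monoidal =
  fixes C :: "('o,'m) moncat"
  assumes strict_monoidal: "strict_monoidal_category C"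
begin

lemma Dm_Ob [simp]: "f \<in> Ar C \<Longrightarrow> Dm C f \<in> Ob C"
  and Cd_Ob [simp]: "f \<in> Ar C \<Longrightarrow> Cd C f \<in> Ob C"
  and Idm_Ar [simp]: "A \<in> Ob C \<Longrightarrow> Idm C A \<in> Ar C"
  and Dm_Idm [simp]: "A \<in> Ob C \<Longrightarrow> Dm C (Idm C A) = A"
  and Cd_Idm [simp]: "A \<in> Ob C \<Longrightarrow> Cd C (Idm C A) = A"
  using strict_monoidal unfolding strict_monoidal_category_def hom_def by auto

lemma Cmp_Ar [simp]: "f \<in> Ar C \<Longrightarrow> g \<in> Ar C \<Longrightarrow> Dm C g = Cd C f \<Longrightarrow> Cmp C g f \<in> Ar C"
  and Dm_Cmp [simp]: "f \<in> Ar C \<Longrightarrow> g \<in> Ar C \<Longrightarrow> Dm C g = Cd C f \<Longrightarrow> Dm C (Cmp C g f) = Dm C f"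
  and Cd_Cmp [simp]: "f \<in> Ar C \<Longrightarrow> g \<in> Ar C \<Longrightarrow> Dm C g = Cd C f \<Longrightarrow> Cd C (Cmp C g f) = Cd C g"
  using strict_monoidal unfolding strict_monoidal_category_def hom_def by auto

lemma Cmp_Idm_left [simp]: "f \<in> Ar C \<Longrightarrow> Cd C f = B \<Longrightarrow> Cmp C (Idm C B) f = f"
  and Cmp_Idm_right [simp]: "f \<in> Ar C \<Longrightarrow> Dm C f = B \<Longrightarrow> Cmp C f (Idm C B) = f"
  using strict_monoidal unfolding strict_monoidal_category_def by auto

lemma Cmp_assoc [simp]:
  "f \<in> Ar C \<Longrightarrow> g \<in> Ar C \<Longrightarrow> h \<in> Ar C \<Longrightarrow> Dm C g = Cd C f \<Longrightarrow> Dm C h = Cd C g \<Longrightarrow>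
    Cmp C (Cmp C h g) f = Cmp C h (Cmp C g f)"
  using strict_monoidal unfolding strict_monoidal_category_def by metis

lemma UnitOb_Ob [simp]: "UnitOb C \<in> Ob C"
  and Tn_Ob [simp]: "A \<in> Ob C \<Longrightarrow> B \<in> Ob C \<Longrightarrow> Tn C A B \<in> Ob C"
  and TnM_Ar [simp]: "f \<in> Ar C \<Longrightarrow> g \<in> Ar C \<Longrightarrow> TnM C f g \<in> Ar C"
  and Dm_TnM [simp]: "f \<in> Ar C \<Longrightarrow> g \<in> Ar C \<Longrightarrow> Dm C (TnM C f g) = Tn C (Dm C f) (Dm C g)"
  and Cd_TnM [simp]: "f \<in> Ar C \<Longrightarrow> g \<in> Ar C \<Longrightarrow> Cd C (TnM C f g) = Tn C (Cd C f) (Cd C g)"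
  and TnM_Idm [simp]: "A \<in> Ob C \<Longrightarrow> B \<in> Ob C \<Longrightarrow> TnM C (Idm C A) (Idm C B) = Idm C (Tn C A B)"
  using strict_monoidal unfolding strict_monoidal_category_def hom_def by auto

lemma interchange:
  "f \<in> Ar C \<Longrightarrow> g \<in> Ar C \<Longrightarrow> f' \<in> Ar C \<Longrightarrow> g' \<in> Ar C \<Longrightarrow>
    Dm C g = Cd C f \<Longrightarrow> Dm C g' = Cd C f' \<Longrightarrow>
    TnM C (Cmp C g f) (Cmp C g' f') = Cmp C (TnM C g g') (TnM C f f')"
  using strict_monoidal unfolding strict_monoidal_category_def by blast

lemma Tn_assoc [simp]: "A \<in> Ob C \<Longrightarrow> B \<in> Ob C \<Longrightarrow> E \<in> Ob C \<Longrightarrow> Tn C (Tn C A B) E = Tn C A (Tn C B E)"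
  and Tn_UnitOb_left [simp]: "A \<in> Ob C \<Longrightarrow> Tn C (UnitOb C) A = A"
  and Tn_UnitOb_right [simp]: "A \<in> Ob C \<Longrightarrow> Tn C A (UnitOb C) = A"
  and TnM_assoc [simp]: "f \<in> Ar C \<Longrightarrow> g \<in> Ar C \<Longrightarrow> h \<in> Ar C \<Longrightarrow> TnM C (TnM C f g) h = TnM C f (TnM C g h)"
  and TnM_UnitOb_left [simp]: "f \<in> Ar C \<Longrightarrow> TnM C (Idm C (UnitOb C)) f = f"
  and TnM_UnitOb_right [simp]: "f \<in> Ar C \<Longrightarrow> TnM C f (Idm C (UnitOb C)) = f"
  using strict_monoidal unfolding strict_monoidal_category_def by auto

lemma TnM_Cmp_Idm_right [simp]:
  "f \<in> Ar C \<Longrightarrow> g \<in> Ar C \<Longrightarrow> Dm C g = Cd C f \<Longrightarrow> A \<in> Ob C \<Longrightarrow>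
    TnM C (Cmp C g f) (Idm C A) = Cmp C (TnM C g (Idm C A)) (TnM C f (Idm C A))"
  using interchange[of f g "Idm C A" "Idm C A"] by simp

lemma TnM_Idm_Cmp [simp]:
  "f \<in> Ar C \<Longrightarrow> g \<in> Ar C \<Longrightarrow> Dm C g = Cd C f \<Longrightarrow> A \<in> Ob C \<Longrightarrow>
    TnM C (Idm C A) (Cmp C g f) = Cmp C (TnM C (Idm C A) g) (TnM C (Idm C A) f)"
  using interchange[of "Idm C A" "Idm C A" f g] by simp

lemma TnM_Idm_Idm [simp]:
  "A \<in> Ob C \<Longrightarrow> B \<in> Ob C \<Longrightarrow> f \<in> Ar C \<Longrightarrow>
    TnM C (Idm C A) (TnM C (Idm C B) f) = TnM C (Idm C (Tn C A B)) f"
  using TnM_assoc[of "Idm C A" "Idm C B" f] by simp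

lemma whiskers_right_left_eq_TnM:
  assumes "f \<in> Ar C" "g \<in> Ar C" "Cd C f = B" "Dm C g = E"
  shows "Cmp C (TnM C (Idm C B) g) (TnM C f (Idm C E)) = TnM C f g"
  using interchange[of f "Idm C (Cd C f)" "Idm C (Dm C g)" g] assms(1,2) by (simp add: assms(3,4)[symmetric])

lemma whiskers_left_right_eq_TnM:
  assumes "f \<in> Ar C" "g \<in> Ar C" "Cd C g = K" "Dm C f = A"
  shows "Cmp C (TnM C f (Idm C K)) (TnM C (Idm C A) g) = TnM C f g"
  using interchange[of "Idm C (Dm C f)" f g "Idm C (Cd C g)"] assms(1,2) by (simp add: assms(3,4)[symmetric])

lemma whisker_exchange:
  "f \<in> Ar C \<Longrightarrow> g \<in> Ar C \<Longrightarrow> Cd C f = B \<Longrightarrow> Dm C g = E \<Longrightarrow>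
    Cmp C (TnM C (Idm C B) g) (TnM C f (Idm C E)) = Cmp C (TnM C f (Idm C (Cd C g))) (TnM C (Idm C (Dm C f)) g)"
  using whiskers_right_left_eq_TnM[of f g B E] whiskers_left_right_eq_TnM[of f g "Cd C g" "Dm C f"] by simp

lemma whiskers_right_left_eq_TnM_whiskered:
  assumes "f \<in> Ar C" "g \<in> Ar C" "A \<in> Ob C" "Cd C f = B" "Dm C g = E"
  shows "Cmp C (TnM C (Idm C (Tn C A B)) g) (TnM C (Idm C A) (TnM C f (Idm C E))) = TnM C (Idm C A) (TnM C f g)"
proof -
  have "B \<in> Ob C" "E \<in> Ob C" using assms Cd_Ob Dm_Ob by blast+
  then have "Cmp C (TnM C (Idm C (Tn C A B)) g) (TnM C (Idm C A) (TnM C f (Idm C E)))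
      = TnM C (Idm C A) (Cmp C (TnM C (Idm C B) g) (TnM C f (Idm C E)))"
    using assms TnM_assoc[of "Idm C A" "Idm C B" g] by (simp del: TnM_Idm_Idm)
  also have "\<dots> = TnM C (Idm C A) (TnM C f g)"
    using assms \<open>B \<in> Ob C\<close> \<open>E \<in> Ob C\<close> whiskers_right_left_eq_TnM[of f g B E] by simp
  finally show ?thesis .
qed

(* The simplifier keeps composites right-nested by Cmp_assoc, so an equation between
   binary composites is supplied to it in this form, acting on the two outermost factors. *)
lemma Cmp_eq_right_assoc:
  assumes "Cmp C g f = Cmp C g' f'" "f \<in> Ar C" "g \<in> Ar C" "f' \<in> Ar C" "g' \<in> Ar C"
    "Dm C g = Cd C f" "Dm C g' = Cd C f'" "k \<in> Ar C" "Cd C k = Dm C f"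
  shows "Cmp C g (Cmp C f k) = Cmp C g' (Cmp C f' k)"
proof -
  have "Dm C f' = Dm C f"
    using assms Dm_Cmp[of f g] Dm_Cmp[of f' g'] by metis
  then show ?thesis
    using assms Cmp_assoc[of k f g] Cmp_assoc[of k f' g'] by simp
qed

lemma Cmp_Idm_right_assoc:
  assumes "Cmp C g f = Idm C B" "B \<in> Ob C" "f \<in> Ar C" "g \<in> Ar C"
    "Dm C g = Cd C f" "k \<in> Ar C" "Cd C k = Dm C f"
  shows "Cmp C g (Cmp C f k) = k"
proof -
  have "Dm C f = B"
    using assms Dm_Cmp[of f g] Dm_Idm[of B] by metis
  then show ?thesis
    using assms Cmp_assoc[of k f g] by simp
qed

lemma inverse_unique:
  assumes "a \<in> Ar C" "b \<in> Ar C" "c \<in> Ar C" "Dm C b = Cd C c" "Dm C c = Cd C a"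
    and "Cmp C b c = Idm C (Dm C c)" "Cmp C c a = Idm C (Cd C c)"
  shows "a = b"
proof -
  have "a = Cmp C (Cmp C b c) a" using assms by simp
  also have "\<dots> = Cmp C b (Cmp C c a)" using assms by (intro Cmp_assoc) auto
  also have "\<dots> = b" using assms by simp
  finally show ?thesis .
qed

end

locale cat_functor = C: strict_monoidal C + D: strict_monoidal D
  for C :: "('a,'b) moncat" and D :: "('c,'d) moncat" +
  fixes F :: "('a,'b,'c,'d) cmf"
  assumes functorial: "is_functor C D F"
begin

lemma cfo_Ob [simp]: "A \<in> Ob C \<Longrightarrow> cfo F A \<in> Ob D"
  using functorial unfolding is_functor_def by blast

lemma cfm_hom: "f \<in> Ar C \<Longrightarrow> cfm F f \<in> hom D (cfo F (Dm C f)) (cfo F (Cd C f))"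
  using functorial C.Dm_Ob C.Cd_Ob unfolding is_functor_def hom_def by blast

lemma cfm_Ar [simp]: "f \<in> Ar C \<Longrightarrow> cfm F f \<in> Ar D"
  and Dm_cfm [simp]: "f \<in> Ar C \<Longrightarrow> Dm D (cfm F f) = cfo F (Dm C f)"
  and Cd_cfm [simp]: "f \<in> Ar C \<Longrightarrow> Cd D (cfm F f) = cfo F (Cd C f)"
  using cfm_hom unfolding hom_def by simp_all

lemma cfm_Idm [simp]: "A \<in> Ob C \<Longrightarrow> cfm F (Idm C A) = Idm D (cfo F A)"
  and cfm_Cmp [simp]: "f \<in> Ar C \<Longrightarrow> g \<in> Ar C \<Longrightarrow> Dm C g = Cd C f \<Longrightarrow>
    cfm F (Cmp C g f) = Cmp D (cfm F g) (cfm F f)"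
  using functorial unfolding is_functor_def by blast+

lemma cfm_Cmp_eq:
  assumes "Cmp C g f = Cmp C g' f'" "f \<in> Ar C" "g \<in> Ar C" "f' \<in> Ar C" "g' \<in> Ar C"
    "Dm C g = Cd C f" "Dm C g' = Cd C f'"
  shows "Cmp D (cfm F g) (cfm F f) = Cmp D (cfm F g') (cfm F f')"
  using arg_cong[OF assms(1), of "cfm F"] assms(2-) by simp

lemma cfm_Cmp_eq_Idm:
  assumes "Cmp C g f = Idm C A" "A \<in> Ob C" "f \<in> Ar C" "g \<in> Ar C" "Dm C g = Cd C f"
  shows "Cmp D (cfm F g) (cfm F f) = Idm D (cfo F A)"
  using arg_cong[OF assms(1), of "cfm F"] assms(2-) by simp

end

locale comonoidal = cat_functor +
  assumes comonoidal: "comonoidal_functor C D F"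
begin

lemma cf2_hom: "X \<in> Ob C \<Longrightarrow> Y \<in> Ob C \<Longrightarrow> cf2 F X Y \<in> hom D (cfo F (Tn C X Y)) (Tn D (cfo F X) (cfo F Y))"
  using comonoidal unfolding comonoidal_functor_def by blast

lemma cf2_Ar [simp]: "X \<in> Ob C \<Longrightarrow> Y \<in> Ob C \<Longrightarrow> cf2 F X Y \<in> Ar D"
  and Dm_cf2 [simp]: "X \<in> Ob C \<Longrightarrow> Y \<in> Ob C \<Longrightarrow> Dm D (cf2 F X Y) = cfo F (Tn C X Y)"
  and Cd_cf2 [simp]: "X \<in> Ob C \<Longrightarrow> Y \<in> Ob C \<Longrightarrow> Cd D (cf2 F X Y) = Tn D (cfo F X) (cfo F Y)"
  using cf2_hom unfolding hom_def by simp_all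

lemma cf0_Ar [simp]: "cf0 F \<in> Ar D"
  and Dm_cf0 [simp]: "Dm D (cf0 F) = cfo F (UnitOb C)"
  and Cd_cf0 [simp]: "Cd D (cf0 F) = UnitOb D"
  using comonoidal unfolding comonoidal_functor_def hom_def by simp_all

lemma cf2_natural:
  "f \<in> Ar C \<Longrightarrow> g \<in> Ar C \<Longrightarrow>
    Cmp D (TnM D (cfm F f) (cfm F g)) (cf2 F (Dm C f) (Dm C g)) = Cmp D (cf2 F (Cd C f) (Cd C g)) (cfm F (TnM C f g))"
  using comonoidal unfolding comonoidal_functor_def by blast

lemma cf2_natural_left:
  "w \<in> Ar C \<Longrightarrow> Dm C w = A \<Longrightarrow> X \<in> Ob C \<Longrightarrow>
    Cmp D (TnM D (cfm F w) (Idm D (cfo F X))) (cf2 F A X) = Cmp D (cf2 F (Cd C w) X) (cfm F (TnM C w (Idm C X)))"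
  using cf2_natural[of w "Idm C X"] by simp

lemma cf2_natural_left':
  "w \<in> Ar C \<Longrightarrow> Cd C w = B \<Longrightarrow> X \<in> Ob C \<Longrightarrow>
    Cmp D (cf2 F B X) (cfm F (TnM C w (Idm C X))) = Cmp D (TnM D (cfm F w) (Idm D (cfo F X))) (cf2 F (Dm C w) X)"
  using cf2_natural[of w "Idm C X"] by simp

lemma cf2_natural_right:
  "w \<in> Ar C \<Longrightarrow> Dm C w = B \<Longrightarrow> A \<in> Ob C \<Longrightarrow>
    Cmp D (TnM D (Idm D (cfo F A)) (cfm F w)) (cf2 F A B) = Cmp D (cf2 F A (Cd C w)) (cfm F (TnM C (Idm C A) w))"
  using cf2_natural[of "Idm C A" w] by simp

lemma cf2_natural_right':
  "w \<in> Ar C \<Longrightarrow> Cd C w = B \<Longrightarrow> A \<in> Ob C \<Longrightarrow>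
    Cmp D (cf2 F A B) (cfm F (TnM C (Idm C A) w)) = Cmp D (TnM D (Idm D (cfo F A)) (cfm F w)) (cf2 F A (Dm C w))"
  using cf2_natural[of "Idm C A" w] by simp

lemma cf2_coassoc:
  "X \<in> Ob C \<Longrightarrow> Y \<in> Ob C \<Longrightarrow> Z \<in> Ob C \<Longrightarrow> E = Tn C X Y \<Longrightarrow>
    Cmp D (TnM D (cf2 F X Y) (Idm D (cfo F Z))) (cf2 F E Z)
      = Cmp D (TnM D (Idm D (cfo F X)) (cf2 F Y Z)) (cf2 F X (Tn C Y Z))"
  using comonoidal unfolding comonoidal_functor_def by blast

lemma cf2_counit_right:
  "X \<in> Ob C \<Longrightarrow> Cmp D (TnM D (Idm D (cfo F X)) (cf0 F)) (cf2 F X (UnitOb C)) = Idm D (cfo F X)"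
  and cf2_counit_left:
  "X \<in> Ob C \<Longrightarrow> Cmp D (TnM D (cf0 F) (Idm D (cfo F X))) (cf2 F (UnitOb C) X) = Idm D (cfo F X)"
  using comonoidal unfolding comonoidal_functor_def by blast+

end

lemma cmf_comp_simps [simp]:
  "cfo (cmf_comp E G F) = (\<lambda>x. cfo G (cfo F x))"
  "cfm (cmf_comp E G F) = (\<lambda>x. cfm G (cfm F x))"
  "cf2 (cmf_comp E G F) X Y = Cmp E (cf2 G (cfo F X) (cfo F Y)) (cfm G (cf2 F X Y))"
  "cf0 (cmf_comp E G F) = Cmp E (cf0 G) (cfm G (cf0 F))"
  by (simp_all add: cmf_comp_def o_def)

lemma cmf_id_simps [simp]:
  "cfo (cmf_id C) = id" "cfm (cmf_id C) = id"
  "cf2 (cmf_id C) X Y = Idm C (Tn C X Y)" "cf0 (cmf_id C) = Idm C (UnitOb C)"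
  by (simp_all add: cmf_id_def)

locale strong_comonoidal = comonoidal +
  fixes Finv2 :: "'a \<Rightarrow> 'a \<Rightarrow> 'd"
  assumes strong: "strong_with_inverse C D F Finv2"
begin

lemma Finv2_inverse:
  "X \<in> Ob C \<Longrightarrow> Y \<in> Ob C \<Longrightarrow>
    Finv2 X Y \<in> hom D (Tn D (cfo F X) (cfo F Y)) (cfo F (Tn C X Y)) \<and>
    Cmp D (Finv2 X Y) (cf2 F X Y) = Idm D (cfo F (Tn C X Y)) \<and>
    Cmp D (cf2 F X Y) (Finv2 X Y) = Idm D (Tn D (cfo F X) (cfo F Y))"
  using strong unfolding strong_with_inverse_def by blast

lemma Finv2_Ar [simp]: "X \<in> Ob C \<Longrightarrow> Y \<in> Ob C \<Longrightarrow> Finv2 X Y \<in> Ar D"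
  and Dm_Finv2 [simp]: "X \<in> Ob C \<Longrightarrow> Y \<in> Ob C \<Longrightarrow> Dm D (Finv2 X Y) = Tn D (cfo F X) (cfo F Y)"
  and Cd_Finv2 [simp]: "X \<in> Ob C \<Longrightarrow> Y \<in> Ob C \<Longrightarrow> Cd D (Finv2 X Y) = cfo F (Tn C X Y)"
  and Finv2_cf2 [simp]: "X \<in> Ob C \<Longrightarrow> Y \<in> Ob C \<Longrightarrow> Cmp D (Finv2 X Y) (cf2 F X Y) = Idm D (cfo F (Tn C X Y))"
  and cf2_Finv2 [simp]: "X \<in> Ob C \<Longrightarrow> Y \<in> Ob C \<Longrightarrow> Cmp D (cf2 F X Y) (Finv2 X Y) = Idm D (Tn D (cfo F X) (cfo F Y))"
  using Finv2_inverse unfolding hom_def by simp_all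

lemma Finv2_cf2_whisker [simp]:
  "X \<in> Ob C \<Longrightarrow> Y \<in> Ob C \<Longrightarrow> K \<in> Ob D \<Longrightarrow>
    Cmp D (TnM D (Finv2 X Y) (Idm D K)) (TnM D (cf2 F X Y) (Idm D K)) = Idm D (Tn D (cfo F (Tn C X Y)) K)"
  "X \<in> Ob C \<Longrightarrow> Y \<in> Ob C \<Longrightarrow> K \<in> Ob D \<Longrightarrow>
    Cmp D (TnM D (Idm D K) (Finv2 X Y)) (TnM D (Idm D K) (cf2 F X Y)) = Idm D (Tn D K (cfo F (Tn C X Y)))"
  "X \<in> Ob C \<Longrightarrow> Y \<in> Ob C \<Longrightarrow> K \<in> Ob D \<Longrightarrow>
    Cmp D (TnM D (Idm D K) (cf2 F X Y)) (TnM D (Idm D K) (Finv2 X Y)) = Idm D (Tn D K (Tn D (cfo F X) (cfo F Y)))"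
  by (simp_all flip: D.TnM_Cmp_Idm_right D.TnM_Idm_Cmp)

lemmas Finv2_cf2_right_assoc [simp] =
  D.Cmp_Idm_right_assoc[OF Finv2_cf2] D.Cmp_Idm_right_assoc[OF cf2_Finv2]
  D.Cmp_Idm_right_assoc[OF Finv2_cf2_whisker(1)]
  D.Cmp_Idm_right_assoc[OF Finv2_cf2_whisker(2)]

lemma Finv2_natural_right:
  assumes w: "w \<in> Ar C" "Cd C w = B" and A: "A \<in> Ob C"
  shows "Cmp D (Finv2 A B) (TnM D (Idm D (cfo F A)) (cfm F w))
    = Cmp D (cfm F (TnM C (Idm C A) w)) (Finv2 A (Dm C w))"
proof -
  have B: "B \<in> Ob C" using w C.Cd_Ob by blast
  have "Cmp D (cfm F (TnM C (Idm C A) w)) (Finv2 A (Dm C w)) =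
      Cmp D (Finv2 A B) (Cmp D (cf2 F A B) (Cmp D (cfm F (TnM C (Idm C A) w)) (Finv2 A (Dm C w))))"
    using w A B by simp
  also have "\<dots> = Cmp D (Finv2 A B) (TnM D (Idm D (cfo F A)) (cfm F w))"
    using w A B by (simp add: D.Cmp_eq_right_assoc[OF cf2_natural_right'])
  finally show ?thesis by simp
qed

lemma Finv2_natural_left:
  assumes w: "w \<in> Ar C" "Cd C w = A" and B: "B \<in> Ob C"
  shows "Cmp D (Finv2 A B) (TnM D (cfm F w) (Idm D (cfo F B)))
    = Cmp D (cfm F (TnM C w (Idm C B))) (Finv2 (Dm C w) B)"
proof -
  have A: "A \<in> Ob C" using w C.Cd_Ob by blast
  have "Cmp D (cfm F (TnM C w (Idm C B))) (Finv2 (Dm C w) B) =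
      Cmp D (Finv2 A B) (Cmp D (cf2 F A B) (Cmp D (cfm F (TnM C w (Idm C B))) (Finv2 (Dm C w) B)))"
    using w A B by simp
  also have "\<dots> = Cmp D (Finv2 A B) (TnM D (cfm F w) (Idm D (cfo F B)))"
    using w A B by (simp add: D.Cmp_eq_right_assoc[OF cf2_natural_left'])
  finally show ?thesis by simp
qed

lemma Finv2_natural_right':
  "w \<in> Ar C \<Longrightarrow> Dm C w = B \<Longrightarrow> A \<in> Ob C \<Longrightarrow>
    Cmp D (cfm F (TnM C (Idm C A) w)) (Finv2 A B) = Cmp D (Finv2 A (Cd C w)) (TnM D (Idm D (cfo F A)) (cfm F w))"
  using Finv2_natural_right[of w "Cd C w" A] by simp

lemma Finv2_natural_left':
  "w \<in> Ar C \<Longrightarrow> Dm C w = A \<Longrightarrow> B \<in> Ob C \<Longrightarrow>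
    Cmp D (cfm F (TnM C w (Idm C B))) (Finv2 A B) = Cmp D (Finv2 (Cd C w) B) (TnM D (cfm F w) (Idm D (cfo F B)))"
  using Finv2_natural_left[of w "Cd C w" B] by simp

lemma Finv2_coassoc:
  assumes "A \<in> Ob C" "B \<in> Ob C" "E \<in> Ob C"
  shows "Cmp D (Finv2 A (Tn C B E)) (TnM D (Idm D (cfo F A)) (Finv2 B E))
    = Cmp D (Finv2 (Tn C A B) E) (TnM D (Finv2 A B) (Idm D (cfo F E)))"
proof -
  let ?c = "Cmp D (TnM D (cf2 F A B) (Idm D (cfo F E))) (cf2 F (Tn C A B) E)"
  have c: "?c = Cmp D (TnM D (Idm D (cfo F A)) (cf2 F B E)) (cf2 F A (Tn C B E))"
    using assms by (simp add: cf2_coassoc)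
  show ?thesis
  proof (rule D.inverse_unique[where c = ?c])
    show "Cmp D (Cmp D (Finv2 (Tn C A B) E) (TnM D (Finv2 A B) (Idm D (cfo F E)))) ?c = Idm D (Dm D ?c)"
      using assms by simp
    show "Cmp D ?c (Cmp D (Finv2 A (Tn C B E)) (TnM D (Idm D (cfo F A)) (Finv2 B E))) = Idm D (Cd D ?c)"
      unfolding c using assms by simp
  qed (use assms in simp_all)
qed

lemma cf2_Finv2_coassoc:
  assumes "A \<in> Ob C" "B \<in> Ob C" "E \<in> Ob C"
  shows "Cmp D (cf2 F A (Tn C B E)) (Finv2 (Tn C A B) E)
    = Cmp D (TnM D (Idm D (cfo F A)) (Finv2 B E)) (TnM D (cf2 F A B) (Idm D (cfo F E)))"
proof -
  have c: "Cmp D (TnM D (Idm D (cfo F A)) (cf2 F B E)) (cf2 F A (Tn C B E))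
      = Cmp D (TnM D (cf2 F A B) (Idm D (cfo F E))) (cf2 F (Tn C A B) E)"
    using assms by (simp add: cf2_coassoc)
  have "Cmp D (cf2 F A (Tn C B E)) (Finv2 (Tn C A B) E) =
      Cmp D (TnM D (Idm D (cfo F A)) (Finv2 B E)) (Cmp D (TnM D (Idm D (cfo F A)) (cf2 F B E))
        (Cmp D (cf2 F A (Tn C B E)) (Finv2 (Tn C A B) E)))"
    using assms by simp
  also have "\<dots> = Cmp D (TnM D (Idm D (cfo F A)) (Finv2 B E)) (Cmp D (TnM D (cf2 F A B) (Idm D (cfo F E)))
        (Cmp D (cf2 F (Tn C A B) E) (Finv2 (Tn C A B) E)))"
    using assms by (subst D.Cmp_eq_right_assoc[OF c]) simp_all
  also have "\<dots> = Cmp D (TnM D (Idm D (cfo F A)) (Finv2 B E)) (TnM D (cf2 F A B) (Idm D (cfo F E)))"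
    using assms by simp
  finally show ?thesis .
qed

lemma Finv2_UnitOb: "X \<in> Ob C \<Longrightarrow> Finv2 X (UnitOb C) = TnM D (Idm D (cfo F X)) (cf0 F)"
  by (rule D.inverse_unique[where c = "cf2 F X (UnitOb C)"]) (simp_all add: cf2_counit_right)

end

locale comonoidal_lifting =
  C: strict_monoidal C + D: strict_monoidal D +
  F: strong_comonoidal D C F Finv2 + Fb: comonoidal C D Fb + G: comonoidal D D G
  for C :: "('a,'b) moncat" and D :: "('c,'d) moncat"
    and F :: "('c,'d,'a,'b) cmf" and Finv2 :: "'c \<Rightarrow> 'c \<Rightarrow> 'b"
    and Fb :: "('a,'b,'c,'d) cmf" and G :: "('c,'d,'c,'d) cmf" +
  fixes \<eta> :: "'a \<Rightarrow> 'b"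
  assumes unit_comonoidal: "comonoidal_transformation C C (cmf_id C) (cmf_comp C F Fb) \<eta>"
begin

lemma eta_hom: "V \<in> Ob C \<Longrightarrow> \<eta> V \<in> hom C V (cfo F (cfo Fb V))"
  using unit_comonoidal unfolding comonoidal_transformation_def nat_trans_def by simp

lemma eta_Ar [simp]: "V \<in> Ob C \<Longrightarrow> \<eta> V \<in> Ar C"
  and Dm_eta [simp]: "V \<in> Ob C \<Longrightarrow> Dm C (\<eta> V) = V"
  and Cd_eta [simp]: "V \<in> Ob C \<Longrightarrow> Cd C (\<eta> V) = cfo F (cfo Fb V)"
  using eta_hom unfolding hom_def by simp_all

lemma eta_natural:
  "v \<in> Ar C \<Longrightarrow> Cd C v = B \<Longrightarrow> Cmp C (\<eta> B) v = Cmp C (cfm F (cfm Fb v)) (\<eta> (Dm C v))"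
  using unit_comonoidal unfolding comonoidal_transformation_def nat_trans_def by auto

lemma eta_cf2:
  assumes "V \<in> Ob C" "W \<in> Ob C"
  shows "Cmp C (cfm F (cf2 Fb V W)) (\<eta> (Tn C V W)) = Cmp C (Finv2 (cfo Fb V) (cfo Fb W)) (TnM C (\<eta> V) (\<eta> W))"
proof -
  have "TnM C (\<eta> V) (\<eta> W) =
      Cmp C (cf2 F (cfo Fb V) (cfo Fb W)) (Cmp C (cfm F (cf2 Fb V W)) (\<eta> (Tn C V W)))"
    using unit_comonoidal assms unfolding comonoidal_transformation_def by simp
  then show ?thesis using assms by simp
qed

lemma eta_cf0: "Cmp C (cf0 F) (Cmp C (cfm F (cf0 Fb)) (\<eta> (UnitOb C))) = Idm C (UnitOb C)"
  using unit_comonoidal unfolding comonoidal_transformation_def by simp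

lemma eta_whisker_natural:
  "v \<in> Ar C \<Longrightarrow> Cd C v = B \<Longrightarrow> K \<in> Ob C \<Longrightarrow>
    Cmp C (TnM C (Idm C K) (\<eta> B)) (TnM C (Idm C K) v)
      = Cmp C (TnM C (Idm C K) (cfm F (cfm Fb v))) (TnM C (Idm C K) (\<eta> (Dm C v)))"
  using C.Cd_Ob[of v] by (simp add: eta_natural flip: C.TnM_Idm_Cmp)

lemma eta_whisker_cf2:
  "K \<in> Ob C \<Longrightarrow> V \<in> Ob C \<Longrightarrow> W \<in> Ob C \<Longrightarrow>
    Cmp C (TnM C (Idm C K) (cfm F (cf2 Fb V W))) (TnM C (Idm C K) (\<eta> (Tn C V W)))
      = Cmp C (TnM C (Idm C K) (Finv2 (cfo Fb V) (cfo Fb W))) (TnM C (Idm C K) (TnM C (\<eta> V) (\<eta> W)))"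
  by (simp add: eta_cf2 flip: C.TnM_Idm_Cmp)

lemma eta_whisker_cf0:
  "K \<in> Ob C \<Longrightarrow>
    Cmp C (TnM C (Idm C K) (cf0 F)) (Cmp C (TnM C (Idm C K) (cfm F (cf0 Fb))) (TnM C (Idm C K) (\<eta> (UnitOb C))))
      = Idm C K"
  by (simp add: eta_cf0 flip: C.TnM_Idm_Cmp)

end

locale lax_half_braided = comonoidal_lifting +
  fixes X :: 'c and \<gamma> :: "'c \<Rightarrow> 'd"
  assumes half_braiding: "lax_half_braiding D G X \<gamma>"
begin

lemma X_Ob [simp]: "X \<in> Ob D"
  using half_braiding unfolding lax_half_braiding_def by blast

lemma gamma_hom: "V \<in> Ob D \<Longrightarrow> \<gamma> V \<in> hom D (Tn D X V) (Tn D (cfo G V) X)"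
  using half_braiding unfolding lax_half_braiding_def by blast

lemma gamma_Ar [simp]: "V \<in> Ob D \<Longrightarrow> \<gamma> V \<in> Ar D"
  and Dm_gamma [simp]: "V \<in> Ob D \<Longrightarrow> Dm D (\<gamma> V) = Tn D X V"
  and Cd_gamma [simp]: "V \<in> Ob D \<Longrightarrow> Cd D (\<gamma> V) = Tn D (cfo G V) X"
  using gamma_hom unfolding hom_def by simp_all

lemma gamma_natural:
  "v \<in> Ar D \<Longrightarrow> Cmp D (\<gamma> (Cd D v)) (TnM D (Idm D X) v) = Cmp D (TnM D (cfm G v) (Idm D X)) (\<gamma> (Dm D v))"
  using half_braiding unfolding lax_half_braiding_def by blast

lemma gamma_cf2:
  "V \<in> Ob D \<Longrightarrow> W \<in> Ob D \<Longrightarrow>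
    Cmp D (TnM D (cf2 G V W) (Idm D X)) (\<gamma> (Tn D V W))
      = Cmp D (TnM D (Idm D (cfo G V)) (\<gamma> W)) (TnM D (\<gamma> V) (Idm D W))"
  using half_braiding unfolding lax_half_braiding_def by blast

lemma gamma_cf0: "Cmp D (TnM D (cf0 G) (Idm D X)) (\<gamma> (UnitOb D)) = Idm D X"
  using half_braiding unfolding lax_half_braiding_def by blast

lemma F_gamma_natural:
  assumes "w \<in> Ar D" "Dm D w = A"
  shows "Cmp C (cfm F (TnM D (cfm G w) (Idm D X))) (cfm F (\<gamma> A))
    = Cmp C (cfm F (\<gamma> (Cd D w))) (cfm F (TnM D (Idm D X) w))"
proof -
  have "A \<in> Ob D" using assms D.Dm_Ob by blast
  then show ?thesis using F.cfm_Cmp_eq[OF gamma_natural[OF assms(1), symmetric]] assms by simp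
qed

lemma F_gamma_natural':
  assumes "w \<in> Ar D" "Cd D w = B"
  shows "Cmp C (cfm F (\<gamma> B)) (cfm F (TnM D (Idm D X) w))
    = Cmp C (cfm F (TnM D (cfm G w) (Idm D X))) (cfm F (\<gamma> (Dm D w)))"
proof -
  have "B \<in> Ob D" using assms D.Cd_Ob by blast
  then show ?thesis using F.cfm_Cmp_eq[OF gamma_natural[OF assms(1)]] assms by simp
qed

lemma F_gamma_cf2:
  "V \<in> Ob D \<Longrightarrow> W \<in> Ob D \<Longrightarrow>
    Cmp C (cfm F (TnM D (cf2 G V W) (Idm D X))) (cfm F (\<gamma> (Tn D V W)))
      = Cmp C (cfm F (TnM D (Idm D (cfo G V)) (\<gamma> W))) (cfm F (TnM D (\<gamma> V) (Idm D W)))"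
  using F.cfm_Cmp_eq[OF gamma_cf2] by simp

lemma F_gamma_cf0: "Cmp C (cfm F (TnM D (cf0 G) (Idm D X))) (cfm F (\<gamma> (UnitOb D))) = Idm C (cfo F X)"
  using F.cfm_Cmp_eq_Idm[OF gamma_cf0] by simp

abbreviation "H \<equiv> cmf_comp C F (cmf_comp D G Fb)"
abbreviation "\<gamma>F \<equiv> induced_gamma C F Finv2 Fb G \<eta> X \<gamma>"

lemma induced_gamma_unfold:
  "\<gamma>F V = Cmp C (cf2 F (cfo G (cfo Fb V)) X)
    (Cmp C (cfm F (\<gamma> (cfo Fb V))) (Cmp C (Finv2 X (cfo Fb V)) (TnM C (Idm C (cfo F X)) (\<eta> V))))"
  by (simp add: induced_gamma_def)

lemma induced_gamma_hom: "V \<in> Ob C \<Longrightarrow> \<gamma>F V \<in> hom C (Tn C (cfo F X) V) (Tn C (cfo H V) (cfo F X))"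
  by (simp add: induced_gamma_unfold hom_def)

lemma induced_gamma_natural:
  assumes "v \<in> Ar C"
  shows "Cmp C (\<gamma>F (Cd C v)) (TnM C (Idm C (cfo F X)) v) = Cmp C (TnM C (cfm H v) (Idm C (cfo F X))) (\<gamma>F (Dm C v))"
  using assms C.Dm_Ob[of v] C.Cd_Ob[of v]
  by (simp add: induced_gamma_unfold eta_whisker_natural
      C.Cmp_eq_right_assoc[OF F.Finv2_natural_right] F.Finv2_natural_right
      C.Cmp_eq_right_assoc[OF F_gamma_natural'] F_gamma_natural'
      C.Cmp_eq_right_assoc[OF F.cf2_natural_left] F.cf2_natural_left)

lemma induced_gamma_cf0: "Cmp C (TnM C (cf0 H) (Idm C (cfo F X))) (\<gamma>F (UnitOb C)) = Idm C (cfo F X)"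
  by (simp add: induced_gamma_unfold C.Cmp_eq_right_assoc[OF F.cf2_natural_left] F.cf2_natural_left
      C.Cmp_Idm_right_assoc[OF F.cf2_counit_left] F.cf2_counit_left
      C.Cmp_eq_right_assoc[OF F_gamma_natural] F_gamma_natural C.Cmp_Idm_right_assoc[OF F_gamma_cf0] F_gamma_cf0
      C.Cmp_eq_right_assoc[OF F.Finv2_natural_right'] F.Finv2_natural_right' F.Finv2_UnitOb eta_whisker_cf0)

lemma induced_gamma_cf2:
  assumes V: "V \<in> Ob C" and W: "W \<in> Ob C"
  shows "Cmp C (TnM C (cf2 H V W) (Idm C (cfo F X))) (\<gamma>F (Tn C V W))
    = Cmp C (TnM C (Idm C (cfo H V)) (\<gamma>F W)) (TnM C (\<gamma>F V) (Idm C W))"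
proof -
  let ?V = "cfo Fb V" and ?W = "cfo Fb W"
  let ?FGV = "Idm C (cfo H V)" and ?FW = "Idm C (cfo F ?W)"
  let ?unit_tail = "Cmp C (cfm F (TnM D (Idm D X) (cf2 Fb V W)))
    (Cmp C (Finv2 X (cfo Fb (Tn C V W))) (TnM C (Idm C (cfo F X)) (\<eta> (Tn C V W))))"
  have "Cmp C (TnM C (cf2 H V W) (Idm C (cfo F X))) (\<gamma>F (Tn C V W))
      = Cmp C (TnM C (cf2 F (cfo G ?V) (cfo G ?W)) (Idm C (cfo F X)))
        (Cmp C (cf2 F (Tn D (cfo G ?V) (cfo G ?W)) X)
        (Cmp C (cfm F (TnM D (Idm D (cfo G ?V)) (\<gamma> ?W)))
        (Cmp C (cfm F (TnM D (\<gamma> ?V) (Idm D ?W))) ?unit_tail)))"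
    using V W
    by (simp add: induced_gamma_unfold C.Cmp_eq_right_assoc[OF F.cf2_natural_left] F.cf2_natural_left
      C.Cmp_eq_right_assoc[OF F_gamma_natural] C.Cmp_eq_right_assoc[OF F_gamma_cf2])
  also have "\<dots> = Cmp C (TnM C ?FGV (cf2 F (cfo G ?W) X))
        (Cmp C (TnM C ?FGV (cfm F (\<gamma> ?W)))
        (Cmp C (cf2 F (cfo G ?V) (Tn D X ?W))
        (Cmp C (cfm F (TnM D (\<gamma> ?V) (Idm D ?W))) ?unit_tail)))"
    using V W
    by (simp add: C.Cmp_eq_right_assoc[OF F.cf2_coassoc] C.Cmp_eq_right_assoc[OF F.cf2_natural_right'])
  also have "\<dots> = Cmp C (TnM C ?FGV (cf2 F (cfo G ?W) X))
        (Cmp C (TnM C ?FGV (cfm F (\<gamma> ?W)))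
        (Cmp C (cf2 F (cfo G ?V) (Tn D X ?W))
        (Cmp C (cfm F (TnM D (\<gamma> ?V) (Idm D ?W)))
        (Cmp C (Finv2 (Tn D X ?V) ?W)
        (Cmp C (TnM C (Finv2 X ?V) ?FW) (TnM C (Idm C (cfo F X)) (TnM C (\<eta> V) (\<eta> W))))))))"
    using V W
    by (simp add: C.Cmp_eq_right_assoc[OF F.Finv2_natural_right'] eta_whisker_cf2
      C.Cmp_eq_right_assoc[OF F.Finv2_coassoc])
  also have "\<dots> = Cmp C (TnM C ?FGV (cf2 F (cfo G ?W) X))
        (Cmp C (TnM C ?FGV (cfm F (\<gamma> ?W)))
        (Cmp C (TnM C ?FGV (Finv2 X ?W))
        (Cmp C (TnM C (cf2 F (cfo G ?V) X) ?FW)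
        (Cmp C (TnM C (cfm F (\<gamma> ?V)) ?FW)
        (Cmp C (TnM C (Finv2 X ?V) ?FW) (TnM C (Idm C (cfo F X)) (TnM C (\<eta> V) (\<eta> W))))))))"
    using V W
    by (simp add: C.Cmp_eq_right_assoc[OF F.Finv2_natural_left'] C.Cmp_eq_right_assoc[OF F.cf2_Finv2_coassoc])
  also have "\<dots> = Cmp C (TnM C (Idm C (cfo H V)) (\<gamma>F W)) (TnM C (\<gamma>F V) (Idm C W))"
    using V W
    by (simp add: induced_gamma_unfold C.Cmp_eq_right_assoc[OF C.whisker_exchange] C.whiskers_right_left_eq_TnM_whiskered)
  finally show ?thesis .
qed

lemma induced_gamma_lax_half_braiding: "lax_half_braiding C H (cfo F X) \<gamma>F"
  unfolding lax_half_braiding_def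
  using induced_gamma_hom induced_gamma_natural induced_gamma_cf2 induced_gamma_cf0 by simp

end

context comonoidal_lifting
begin

lemma induced_lax_half_braiding:
  assumes "lax_half_braiding D G X \<gamma>"
  shows "lax_half_braiding C (cmf_comp C F (cmf_comp D G Fb)) (cfo F X) (induced_gamma C F Finv2 Fb G \<eta> X \<gamma>)"
proof -
  interpret lax_half_braided C D F Finv2 Fb G \<eta> X \<gamma>
    using assms by unfold_locales
  show ?thesis by (rule induced_gamma_lax_half_braiding)
qed

lemma induced_lax_Z_mor:
  assumes hb1: "lax_half_braiding D G X1 \<gamma>1" and hb2: "lax_half_braiding D G X2 \<gamma>2"
    and f: "lax_Z_mor D G X1 \<gamma>1 X2 \<gamma>2 f"
  shows "lax_Z_mor C (cmf_comp C F (cmf_comp D G Fb))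
    (cfo F X1) (induced_gamma C F Finv2 Fb G \<eta> X1 \<gamma>1)
    (cfo F X2) (induced_gamma C F Finv2 Fb G \<eta> X2 \<gamma>2) (cfm F f)"
proof -
  interpret X1: lax_half_braided C D F Finv2 Fb G \<eta> X1 \<gamma>1
    using hb1 by unfold_locales
  interpret X2: lax_half_braided C D F Finv2 Fb G \<eta> X2 \<gamma>2
    using hb2 by unfold_locales
  have f_Ar: "f \<in> Ar D" "Dm D f = X1" "Cd D f = X2"
    using f unfolding lax_Z_mor_def hom_def by auto
  have F_f_commutes: "Cmp C (cfm F (TnM D (Idm D (cfo G V)) f)) (cfm F (\<gamma>1 V))
      = Cmp C (cfm F (\<gamma>2 V)) (cfm F (TnM D f (Idm D V)))" if "V \<in> Ob D" for V
    using F.cfm_Cmp_eq[of "TnM D (Idm D (cfo G V)) f" "\<gamma>1 V" "\<gamma>2 V" "TnM D f (Idm D V)"]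
      f f_Ar that unfolding lax_Z_mor_def by simp
  show ?thesis
    unfolding lax_Z_mor_def
  proof (intro conjI ballI)
    show "cfm F f \<in> hom C (cfo F X1) (cfo F X2)"
      using f_Ar by (simp add: hom_def)
  next
    fix V assume "V \<in> Ob C"
    then show "Cmp C (TnM C (Idm C (cfo (cmf_comp C F (cmf_comp D G Fb)) V)) (cfm F f))
        (induced_gamma C F Finv2 Fb G \<eta> X1 \<gamma>1 V)
      = Cmp C (induced_gamma C F Finv2 Fb G \<eta> X2 \<gamma>2 V) (TnM C (cfm F f) (Idm C V))"
      using f_Ar
      by (simp add: X1.induced_gamma_unfold X2.induced_gamma_unfold
        C.Cmp_eq_right_assoc[OF F.cf2_natural_right] F.cf2_natural_right
        C.Cmp_eq_right_assoc[OF F_f_commutes] F_f_commutes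
        C.Cmp_eq_right_assoc[OF F.Finv2_natural_left'] F.Finv2_natural_left'
        C.whiskers_right_left_eq_TnM C.whiskers_left_right_eq_TnM)
  qed
qed

end

theorem mainTheorem2:
  fixes C :: "('a,'b) moncat" and D :: "('c,'d) moncat"
    and F :: "('c,'d,'a,'b) cmf" and Finv2 :: "'c \<Rightarrow> 'c \<Rightarrow> 'b"
    and Fb :: "('a,'b,'c,'d) cmf" and \<eta> :: "'a \<Rightarrow> 'b" and \<epsilon> :: "'c \<Rightarrow> 'd"
    and G :: "('c,'d,'c,'d) cmf"
  assumes "strict_monoidal_category C" and "strict_monoidal_category D"
    and "comonoidal_functor D C F" and "strong_with_inverse D C F Finv2"
    and "comonoidal_functor C D Fb"
    and "adjunction C D Fb F \<eta> \<epsilon>"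
    and "comonoidal_transformation C C (cmf_id C) (cmf_comp C F Fb) \<eta>"
    and "comonoidal_transformation D D (cmf_comp D Fb F) (cmf_id D) \<epsilon>"
    and "comonoidal_functor D D G"
  shows
    "(\<forall>X \<gamma>. lax_half_braiding D G X \<gamma> \<longrightarrow>
        lax_half_braiding C (cmf_comp C F (cmf_comp D G Fb)) (cfo F X)
          (induced_gamma C F Finv2 Fb G \<eta> X \<gamma>)) \<and>
     (\<forall>X1 \<gamma>1 X2 \<gamma>2 f. lax_half_braiding D G X1 \<gamma>1 \<longrightarrow> lax_half_braiding D G X2 \<gamma>2 \<longrightarrow>
        lax_Z_mor D G X1 \<gamma>1 X2 \<gamma>2 f \<longrightarrow>
        lax_Z_mor C (cmf_comp C F (cmf_comp D G Fb))
          (cfo F X1) (induced_gamma C F Finv2 Fb G \<eta> X1 \<gamma>1)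
          (cfo F X2) (induced_gamma C F Finv2 Fb G \<eta> X2 \<gamma>2) (cfm F f)) \<and>
     (\<forall>X \<gamma>. lax_half_braiding D G X \<gamma> \<longrightarrow> cfm F (Idm D X) = Idm C (cfo F X)) \<and>
     (\<forall>X1 \<gamma>1 X2 \<gamma>2 X3 \<gamma>3 f g.
        lax_half_braiding D G X1 \<gamma>1 \<longrightarrow> lax_half_braiding D G X2 \<gamma>2 \<longrightarrow>
        lax_half_braiding D G X3 \<gamma>3 \<longrightarrow>
        lax_Z_mor D G X1 \<gamma>1 X2 \<gamma>2 f \<longrightarrow> lax_Z_mor D G X2 \<gamma>2 X3 \<gamma>3 g \<longrightarrow>
        cfm F (Cmp D g f) = Cmp C (cfm F g) (cfm F f))"
proof -
  interpret comonoidal_lifting C D F Finv2 Fb G \<eta>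
    using assms by unfold_locales (auto simp: comonoidal_functor_def)
  show ?thesis
  proof (intro conjI allI impI)
    fix X \<gamma> assume "lax_half_braiding D G X \<gamma>"
    then show "cfm F (Idm D X) = Idm C (cfo F X)"
      unfolding lax_half_braiding_def by simp
  next
    fix X1 \<gamma>1 X2 \<gamma>2 X3 \<gamma>3 f g
    assume "lax_Z_mor D G X1 \<gamma>1 X2 \<gamma>2 f" "lax_Z_mor D G X2 \<gamma>2 X3 \<gamma>3 g"
    then show "cfm F (Cmp D g f) = Cmp C (cfm F g) (cfm F f)"
      unfolding lax_Z_mor_def hom_def by simp
  qed (simp_all add: induced_lax_half_braiding induced_lax_Z_mor)
qed

end
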